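(* Let $p\ge 2$ and $A\in\mathcal{B}_I(p)$ with common between-group parameter $c$, and let $\alpha_k=\frac1{n_k}+\frac{n_k-1}{n_k}b_k$ ($k=1,\dots,p$). Let $d(c)=\det\phi(A)$, i.e. the determinant of the $p\times p$ matrix with diagonal $\alpha_1,\dots,\alpha_p$ and all off-diagonal entries $c$, viewed as a polynomial in $c$ with $\alpha_1,\dots,\alpha_p$ fixed. When all $\alpha_k>0$, all roots of this polynomial are real; let $r_{p,1}<0$ be its smallest root and $r_{p,2}>0$ its second smallest root (so that, with $\alpha_{(1)}\le\alpha_{(2)}$ the two smallest $\alpha$'s, $r_{p,1}$ is the unique root in $]-\sqrt{\alpha_{(1)}\alpha_{(2)}},0[$ and $r_{p,2}$ the unique root in $]0,\sqrt{\alpha_{(1)}\alpha_{(2)}}]$ up to the ordering conventions of the sorted case). Then $$A\succ 0\iff 0<\alpha_k<1\ \text{for all }k\in\{1,\dots,p\}\ \text{ and }\ r_{p,1}<c<r_{p,2}.$$ Furthermore, for each $k$, the interval $]r_{p,1},r_{p,2}[$ is nondecreasing (with respect to inclusion) in $\alpha_k$: increasing $\alpha_k$ (keeping the other $\alpha$'s fixed and positive) yields an interval containing the previous one.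
   Context: All matrices are real; $\succ 0$ means positive definite. $J_m$ denotes the $m\times m$ matrix of ones, $J_{m,q}=\mathbf 1_m\mathbf 1_q^\top$. For integers $n_1,\dots,n_p\ge1$, $n=\sum n_k$, $\mathcal{B}(p)$ is the set of symmetric $n\times n$ block matrices $A=(A_{k,\ell})$ (block $A_{k,\ell}$ of size $n_k\times n_\ell$) with $A_{k,k}=(1-b_k)I_{n_k}+b_kJ_{n_k}$ and $A_{k,\ell}=A_{\ell,k}^\top=c_{k,\ell}J_{n_k,n_\ell}$ ($k<\ell$), all $b_k,c_{k,\ell}\in]-1,1[$, with $b_k=0$ if $n_k=1$. $\mathcal{B}_I(p)$ is the subset of $\mathcal{B}(p)$ where $c_{k,\ell}=c$ for all $k<\ell$. $\phi(A)$ is the $p\times p$ matrix of block averages $[\phi(A)]_{k,\ell}=\frac{1}{n_kn_\ell}\sum_{i\in G_k,j\in G_\ell}A_{i,j}$ ($G_1$ the first $n_1$ indices, $G_2$ the next $n_2$, etc.); for $A\in\mathcal{B}_I(p)$ it has diagonal $\alpha_1,\dots,\alpha_p$ and off-diagonal entries $c$. *)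

theory Defs
  imports "Jordan_Normal_Form.Determinant"
begin

text \<open>Group index of row/column i (0-based): groups G_0, G_1, ... are consecutive
  index ranges of sizes n 0, n 1, ...\<close>
definition grp :: "(nat \<Rightarrow> nat) \<Rightarrow> nat \<Rightarrow> nat" where
  "grp n i = (LEAST k. i < (\<Sum>j<Suc k. n j))"

text \<open>The block matrix of B(p): diagonal blocks (1-b_k)I + b_k J, off-diagonal blocks c_{k,l} J.\<close>
definition block_mat :: "nat \<Rightarrow> (nat \<Rightarrow> nat) \<Rightarrow> (nat \<Rightarrow> real) \<Rightarrow> (nat \<Rightarrow> nat \<Rightarrow> real) \<Rightarrow> real mat" where
  "block_mat p n b cc = mat (\<Sum>k<p. n k) (\<Sum>k<p. n k)
     (\<lambda>(i,j). if grp n i = grp n j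
              then (if i = j then 1 else b (grp n i))
              else cc (grp n i) (grp n j))"

definition pos_def :: "real mat \<Rightarrow> bool" where
  "pos_def A \<longleftrightarrow> A \<in> carrier_mat (dim_row A) (dim_row A) \<and> A\<^sup>T = A \<and>
     (\<forall>v \<in> carrier_vec (dim_row A). v \<noteq> 0\<^sub>v (dim_row A) \<longrightarrow> 0 < v \<bullet> (A *\<^sub>v v))"

definition alpha :: "(nat \<Rightarrow> nat) \<Rightarrow> (nat \<Rightarrow> real) \<Rightarrow> nat \<Rightarrow> real" where
  "alpha n b k = 1 / real (n k) + (real (n k) - 1) / real (n k) * b k"

text \<open>The p x p matrix with diagonal alpha_1..alpha_p and all off-diagonal entries x
  (= phi(A) for A in B_I(p) with common parameter x).\<close>
definition phiI :: "nat \<Rightarrow> (nat \<Rightarrow> real) \<Rightarrow> real \<Rightarrow> real mat" where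
  "phiI p \<alpha> x = mat p p (\<lambda>(i,j). if i = j then \<alpha> i else x)"

definition dpoly :: "nat \<Rightarrow> (nat \<Rightarrow> real) \<Rightarrow> real \<Rightarrow> real" where
  "dpoly p \<alpha> x = det (phiI p \<alpha> x)"

definition droots :: "nat \<Rightarrow> (nat \<Rightarrow> real) \<Rightarrow> real set" where
  "droots p \<alpha> = {x. dpoly p \<alpha> x = 0}"

definition r1 :: "nat \<Rightarrow> (nat \<Rightarrow> real) \<Rightarrow> real" where
  "r1 p \<alpha> = Min (droots p \<alpha>)"

definition r2 :: "nat \<Rightarrow> (nat \<Rightarrow> real) \<Rightarrow> real" where
  "r2 p \<alpha> = Min (droots p \<alpha> - {r1 p \<alpha>})"

end

theory Submission
  imports Defs "HOL-Analysis.Convex"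
begin

text \<open>Let \<open>s\<^sub>k\<close> be the sum of the coordinates of \<open>v\<close> in group \<open>k\<close>. The quadratic form of
  \<open>A\<close> splits as \<open>s\<^sup>T \<phi>(A) s\<close> plus the within-group terms
  \<open>(1 - b\<^sub>k) (\<Sum>\<^bsub>i\<in>G\<^sub>k\<^esub> v\<^sub>i\<^sup>2 - s\<^sub>k\<^sup>2/n\<^sub>k)\<close>, which are nonnegative by Cauchy-Schwarz and vanish
  on vectors that are constant on each group; so \<open>A \<succ> 0\<close> iff \<open>\<phi>(A) \<succ> 0\<close>.
  The form \<open>\<Sum> (\<alpha>\<^sub>i - c) u\<^sub>i\<^sup>2 + c (\<Sum> u\<^sub>i)\<^sup>2\<close> of \<open>\<phi>(A)\<close> is affine in \<open>c\<close> and increasing in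
  each \<open>\<alpha>\<^sub>i\<close>, so the set of \<open>c\<close> where it is positive definite is an interval containing
  \<open>0\<close>, growing with the \<open>\<alpha>\<^sub>i\<close>. Where no \<open>\<alpha>\<^sub>i\<close> equals \<open>c\<close>, \<open>\<phi>(A)\<close> is singular iff the
  secular function \<open>1 + \<Sum> c/(\<alpha>\<^sub>i - c)\<close> vanishes. This function increases on every
  interval free of poles; this gives exactly one singular point \<open>a < 0\<close>, and a first
  singular point \<open>b > 0\<close> (equal to \<open>min \<alpha>\<^sub>i\<close> if the minimum is attained twice, and otherwise
  lying between the two smallest \<open>\<alpha>\<^sub>i\<close>). Cauchy-Schwarz shows positive definiteness on
  \<open>]a, b[\<close>, hence \<open>a\<close>, \<open>b\<close> are the two smallest roots of \<open>det \<phi>(A)\<close>.\<close>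

definition phi_form :: "nat \<Rightarrow> (nat \<Rightarrow> real) \<Rightarrow> real \<Rightarrow> (nat \<Rightarrow> real) \<Rightarrow> real" where
  "phi_form p \<alpha> x u = (\<Sum>i<p. (\<alpha> i - x) * (u i)\<^sup>2) + x * (\<Sum>i<p. u i)\<^sup>2"

definition phi_pd :: "nat \<Rightarrow> (nat \<Rightarrow> real) \<Rightarrow> real \<Rightarrow> bool" where
  "phi_pd p \<alpha> x \<longleftrightarrow> (\<forall>u. (\<exists>i<p. u i \<noteq> 0) \<longrightarrow> 0 < phi_form p \<alpha> x u)"

definition phi_singular :: "nat \<Rightarrow> (nat \<Rightarrow> real) \<Rightarrow> real \<Rightarrow> bool" where
  "phi_singular p \<alpha> x \<longleftrightarrow>
     (\<exists>u. (\<exists>i<p. u i \<noteq> 0) \<and> (\<forall>i<p. (\<alpha> i - x) * u i + x * (\<Sum>l<p. u l) = 0))"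

definition secular :: "nat \<Rightarrow> (nat \<Rightarrow> real) \<Rightarrow> real \<Rightarrow> real" where
  "secular p \<alpha> x = 1 + (\<Sum>i<p. x / (\<alpha> i - x))"

subsection \<open>The form of \<open>\<phi>(A)\<close>\<close>

lemma phi_singular_not_pd: "phi_singular p \<alpha> x \<Longrightarrow> \<not> phi_pd p \<alpha> x"
proof -
  assume "phi_singular p \<alpha> x"
  then obtain u where u: "\<exists>i<p. u i \<noteq> 0" "\<forall>i<p. (\<alpha> i - x) * u i + x * (\<Sum>l<p. u l) = 0"
    unfolding phi_singular_def by blast
  have "0 = (\<Sum>i<p. u i * ((\<alpha> i - x) * u i + x * (\<Sum>l<p. u l)))" using u(2) by simp
  also have "\<dots> = (\<Sum>i<p. (\<alpha> i - x) * (u i)\<^sup>2 + x * (\<Sum>l<p. u l) * u i)"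
    by (rule sum.cong) (auto simp: power2_eq_square algebra_simps)
  also have "\<dots> = phi_form p \<alpha> x u"
    unfolding phi_form_def by (simp add: sum.distrib sum_distrib_left[symmetric] power2_eq_square)
  finally show ?thesis using u(1) unfolding phi_pd_def by force
qed

lemma phi_form_affine:
  "phi_form p \<alpha> x u = (\<Sum>i<p. \<alpha> i * (u i)\<^sup>2) + x * ((\<Sum>i<p. u i)\<^sup>2 - (\<Sum>i<p. (u i)\<^sup>2))"
  unfolding phi_form_def by (simp add: algebra_simps sum_subtractf sum_distrib_left)

lemma phi_pd_between:
  assumes "phi_pd p \<alpha> x" "phi_pd p \<alpha> y" "x \<le> z" "z \<le> y"
  shows "phi_pd p \<alpha> z"
  unfolding phi_pd_def
proof (intro allI impI)
  fix u :: "nat \<Rightarrow> real" assume u: "\<exists>i<p. u i \<noteq> 0"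
  define A where "A = (\<Sum>i<p. \<alpha> i * (u i)\<^sup>2)"
  define B where "B = (\<Sum>i<p. u i)\<^sup>2 - (\<Sum>i<p. (u i)\<^sup>2)"
  have "0 < A + x * B" "0 < A + y * B"
    using assms(1,2) u unfolding phi_pd_def phi_form_affine A_def B_def by auto
  moreover have "min (x * B) (y * B) \<le> z * B"
    using assms(3,4) mult_right_mono[of x z B] mult_right_mono_neg[of z y B]
    by (cases "0 \<le> B") (auto intro: min.coboundedI1 min.coboundedI2)
  ultimately show "0 < phi_form p \<alpha> z u" unfolding phi_form_affine A_def[symmetric] B_def[symmetric]
    by linarith
qed

lemma phi_pd_mono:
  assumes "phi_pd p \<alpha> x" "\<forall>i<p. \<alpha> i \<le> \<alpha>' i"
  shows "phi_pd p \<alpha>' x"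
  unfolding phi_pd_def
proof (intro allI impI)
  fix u :: "nat \<Rightarrow> real" assume u: "\<exists>i<p. u i \<noteq> 0"
  have "phi_form p \<alpha> x u \<le> phi_form p \<alpha>' x u"
    unfolding phi_form_def using assms(2) by (auto intro!: sum_mono mult_right_mono)
  then show "0 < phi_form p \<alpha>' x u" using assms(1) u unfolding phi_pd_def by force
qed

lemma phi_pd_diag_pos:
  assumes "phi_pd p \<alpha> x" "k < p"
  shows "0 < \<alpha> k"
proof -
  define u :: "nat \<Rightarrow> real" where "u i = (if i = k then 1 else 0)" for i
  have "0 < phi_form p \<alpha> x u" using assms unfolding phi_pd_def u_def by force
  moreover have "(\<Sum>i<p. (\<alpha> i - x) * (u i)\<^sup>2) = (\<Sum>i<p. if i = k then \<alpha> k - x else 0)"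
    by (intro sum.cong) (auto simp: u_def)
  moreover have "(\<Sum>i<p. u i) = 1" using assms(2) unfolding u_def by simp
  ultimately show ?thesis using assms(2) unfolding phi_form_def by simp
qed

lemma weighted_Cauchy_Schwarz:
  fixes \<beta> u :: "'a \<Rightarrow> real"
  assumes "\<forall>i\<in>I. 0 < \<beta> i"
  shows "(\<Sum>i\<in>I. u i)\<^sup>2 \<le> (\<Sum>i\<in>I. \<beta> i * (u i)\<^sup>2) * (\<Sum>i\<in>I. 1 / \<beta> i)"
proof -
  have "(\<Sum>i\<in>I. sqrt (\<beta> i) * u i * (1 / sqrt (\<beta> i))) = (\<Sum>i\<in>I. u i)"
    "(\<Sum>i\<in>I. (sqrt (\<beta> i) * u i)\<^sup>2) = (\<Sum>i\<in>I. \<beta> i * (u i)\<^sup>2)"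
    "(\<Sum>i\<in>I. (1 / sqrt (\<beta> i))\<^sup>2) = (\<Sum>i\<in>I. 1 / \<beta> i)"
    using assms by (auto intro!: sum.cong simp: power_mult_distrib power_divide)
  then show ?thesis
    using Cauchy_Schwarz_ineq_sum[of "\<lambda>i. sqrt (\<beta> i) * u i" "\<lambda>i. 1 / sqrt (\<beta> i)" I] by simp
qed

subsection \<open>The secular function\<close>

lemma phi_singular_iff_secular_eq_0:
  assumes "0 < p" "\<forall>i<p. \<alpha> i \<noteq> x"
  shows "phi_singular p \<alpha> x \<longleftrightarrow> secular p \<alpha> x = 0"
proof
  assume "phi_singular p \<alpha> x"
  then obtain u where u: "\<exists>i<p. u i \<noteq> 0" "\<forall>i<p. (\<alpha> i - x) * u i + x * (\<Sum>l<p. u l) = 0"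
    unfolding phi_singular_def by blast
  define \<sigma> where "\<sigma> = (\<Sum>l<p. u l)"
  have u_eq: "u i = - (x * \<sigma>) / (\<alpha> i - x)" if "i < p" for i
    using u(2) assms(2) that unfolding \<sigma>_def by (simp add: field_simps)
  then have "\<sigma> \<noteq> 0" using u(1) by force
  have "\<sigma> * secular p \<alpha> x = \<sigma> + (\<Sum>i<p. x * \<sigma> / (\<alpha> i - x))"
    unfolding secular_def by (simp add: algebra_simps sum_distrib_left)
  also have "(\<Sum>i<p. x * \<sigma> / (\<alpha> i - x)) = (\<Sum>i<p. - u i)"
    by (rule sum.cong) (auto simp: u_eq)
  also have "\<dots> = - \<sigma>" unfolding \<sigma>_def by (simp add: sum_negf)
  finally show "secular p \<alpha> x = 0" using \<open>\<sigma> \<noteq> 0\<close> by simp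
next
  assume secular: "secular p \<alpha> x = 0"
  define u where "u i = 1 / (\<alpha> i - x)" for i
  have "(\<alpha> i - x) * u i + x * (\<Sum>l<p. u l) = 0" if "i < p" for i
    using that assms(2) secular unfolding u_def secular_def by (simp add: sum_distrib_left)
  moreover have "u 0 \<noteq> 0" using assms unfolding u_def by simp
  ultimately show "phi_singular p \<alpha> x" unfolding phi_singular_def using assms(1) by blast
qed

lemma divide_diff_strict_mono:
  fixes a x y :: real
  assumes "0 < a" "0 < (a - x) * (a - y)" "x < y"
  shows "x / (a - x) < y / (a - y)"
proof -
  have "a - x \<noteq> 0" "a - y \<noteq> 0" using assms(2) by auto
  then have "x / (a - x) - y / (a - y) = a * (x - y) / ((a - x) * (a - y))"
    by (simp add: field_simps)
  also have "\<dots> < 0" using assms by (intro divide_neg_pos) (auto intro: mult_pos_neg)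
  finally show ?thesis by simp
qed

lemma secular_strict_mono:
  assumes "0 < p" "\<forall>i<p. 0 < \<alpha> i \<and> 0 < (\<alpha> i - x) * (\<alpha> i - y)" "x < y"
  shows "secular p \<alpha> x < secular p \<alpha> y"
proof -
  have "(\<Sum>i<p. x / (\<alpha> i - x)) < (\<Sum>i<p. y / (\<alpha> i - y))"
    using assms by (intro sum_strict_mono divide_diff_strict_mono) auto
  then show ?thesis unfolding secular_def by simp
qed

lemma secular_neg_root:
  assumes "2 \<le> p" "\<forall>i<p. 0 < \<alpha> i"
  shows "\<exists>a<0. secular p \<alpha> a = 0"
proof -
  define K where "K = 2 * (\<Sum>i<p. \<alpha> i)"
  have K_ge: "2 * \<alpha> i \<le> K" if "i < p" for i
    using that assms(2) member_le_sum[of i "{..<p}" \<alpha>] unfolding K_def by force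
  have "0 < K" using K_ge[of 0] assms by force
  have "(-K) / (\<alpha> i - (-K)) \<le> -2/3" if "i < p" for i
  proof -
    have "0 < \<alpha> i + K" using assms(2) that \<open>0 < K\<close> by force
    then show ?thesis using K_ge[OF that] by (simp add: field_simps)
  qed
  then have "(\<Sum>i<p. (-K) / (\<alpha> i - (-K))) \<le> (\<Sum>i<p. -2/3)"
    by (intro sum_mono) auto
  then have "secular p \<alpha> (-K) \<le> 0" unfolding secular_def using assms(1) by simp
  moreover have "secular p \<alpha> 0 = 1" unfolding secular_def by simp
  moreover have "continuous_on {-K..0} (secular p \<alpha>)"
    unfolding secular_def using assms(2) by (intro continuous_intros) fastforce
  ultimately obtain a where "-K \<le> a" "a \<le> 0" "secular p \<alpha> a = 0"
    using IVT'[of "secular p \<alpha>" "-K" 0 0] \<open>0 < K\<close> by auto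
  moreover from this have "a \<noteq> 0" using \<open>secular p \<alpha> 0 = 1\<close> by auto
  ultimately show ?thesis by (intro exI[of _ a]) auto
qed

text \<open>Continuity of \<open>(x - \<alpha> j) \<cdot> secular p \<alpha> x\<close> across the pole \<open>\<alpha> j\<close> feeds the
  intermediate value theorem; the test point is \<open>y = (\<alpha> j + 3 \<alpha> k)/4\<close>.\<close>
lemma secular_root_between_min:
  assumes "j < p" "k < p" "0 < \<alpha> j" "\<alpha> j < \<alpha> k" "\<forall>i<p. i \<noteq> j \<longrightarrow> \<alpha> k \<le> \<alpha> i"
  shows "\<exists>b. \<alpha> j < b \<and> b < \<alpha> k \<and> secular p \<alpha> b = 0"
proof -
  define m where "m = \<alpha> j"
  define J where "J = {..<p} - {j}"
  have k: "k \<in> J" using assms unfolding J_def by auto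
  have J_ge: "\<alpha> k \<le> \<alpha> i" if "i \<in> J" for i using assms(5) that unfolding J_def by auto
  define R where "R x = (\<Sum>i\<in>J. x / (\<alpha> i - x))" for x
  have secular_R: "secular p \<alpha> x = 1 + R x + x / (m - x)" for x
    unfolding secular_def R_def J_def m_def using sum.remove[of "{..<p}" j] assms(1)
    by (simp add: ac_simps)
  define E where "E x = (x - m) * (1 + R x) - x" for x
  have E_secular: "E x = (x - m) * secular p \<alpha> x" if "x \<noteq> m" for x
    unfolding E_def secular_R using that by (simp add: field_simps)
  define y where "y = (m + 3 * \<alpha> k) / 4"
  have y: "m < y" "y < \<alpha> k" unfolding y_def m_def using assms(4) by auto
  have "y / (\<alpha> k - y) \<le> R y"
  proof -
    have "0 \<le> (\<Sum>i\<in>J-{k}. y / (\<alpha> i - y))"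
      using J_ge y assms(3) unfolding m_def by (intro sum_nonneg) fastforce
    moreover have "R y = y / (\<alpha> k - y) + (\<Sum>i\<in>J-{k}. y / (\<alpha> i - y))"
      unfolding R_def using k by (intro sum.remove) (auto simp: J_def)
    ultimately show ?thesis by linarith
  qed
  moreover have "y / (\<alpha> k - y) + y / (m - y) = 8 * y / (3 * (\<alpha> k - m))"
  proof -
    have gen: "y / (D / 4) + y / (- 3 * D / 4) = 8 * y / (3 * D)" if "D \<noteq> 0" for D :: real
      using that by (simp add: field_simps)
    have d: "\<alpha> k - y = (\<alpha> k - m) / 4" "m - y = - 3 * (\<alpha> k - m) / 4"
      unfolding y_def by (simp_all add: field_simps)
    show ?thesis unfolding d by (rule gen) (use y in simp)
  qed
  moreover have "0 < 8 * y / (3 * (\<alpha> k - m))" using y assms(3) unfolding m_def by simp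
  ultimately have "0 < secular p \<alpha> y" unfolding secular_R by linarith
  then have "0 \<le> E y" using E_secular[of y] y by simp
  moreover have "E m \<le> 0" unfolding E_def m_def using assms(3) by simp
  moreover have "continuous_on {m..y} E"
    unfolding E_def R_def using J_ge y by (intro continuous_intros) fastforce
  ultimately obtain b where b: "m \<le> b" "b \<le> y" "E b = 0"
    using IVT'[of E m 0 y] y by auto
  then have "b \<noteq> m" using assms(3) unfolding E_def m_def by auto
  then show ?thesis
    using b y E_secular[of b] unfolding m_def by (intro exI[of _ b]) auto
qed

subsection \<open>Positive definiteness near \<open>0\<close>\<close>

lemma phi_pd_if_secular_pos:
  assumes "0 < p" "x \<le> 0" "\<forall>i<p. x < \<alpha> i" "0 < secular p \<alpha> x"
  shows "phi_pd p \<alpha> x"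
  unfolding phi_pd_def
proof (intro allI impI)
  fix u :: "nat \<Rightarrow> real" assume "\<exists>i<p. u i \<noteq> 0"
  then obtain i where i: "i < p" "u i \<noteq> 0" by blast
  define W where "W = (\<Sum>i<p. (\<alpha> i - x) * (u i)\<^sup>2)"
  define S where "S = (\<Sum>i<p. 1 / (\<alpha> i - x))"
  define \<sigma> where "\<sigma> = (\<Sum>i<p. u i)"
  have "\<sigma>\<^sup>2 \<le> W * S"
    unfolding \<sigma>_def W_def S_def using assms(3) by (intro weighted_Cauchy_Schwarz) simp
  then have "x * (W * S) \<le> x * \<sigma>\<^sup>2" using assms(2) by (rule mult_left_mono_neg)
  moreover have "W * secular p \<alpha> x = W + x * (W * S)"
    unfolding S_def secular_def by (simp add: sum_distrib_left algebra_simps)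
  moreover have "0 < W"
    unfolding W_def using assms(3) i
    by (intro sum_pos2[of _ i]) (auto intro: mult_nonneg_nonneg simp: less_imp_le)
  then have "0 < W * secular p \<alpha> x" using assms(4) by simp
  ultimately have "0 < W + x * \<sigma>\<^sup>2" by linarith
  then show "0 < phi_form p \<alpha> x u" unfolding phi_form_def W_def \<sigma>_def .
qed

lemma phi_pd_nonneg_below_diag:
  assumes "j < p" "0 < \<alpha> j" "0 \<le> x" "x \<le> \<alpha> j" "\<forall>i<p. i \<noteq> j \<longrightarrow> x < \<alpha> i"
  shows "phi_pd p \<alpha> x"
  unfolding phi_pd_def
proof (intro allI impI)
  fix u :: "nat \<Rightarrow> real" assume u: "\<exists>i<p. u i \<noteq> 0"
  have nonneg: "0 \<le> (\<alpha> l - x) * (u l)\<^sup>2" if "l < p" for l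
    using assms that by (cases "l = j") (auto simp: less_imp_le)
  show "0 < phi_form p \<alpha> x u"
  proof (cases "\<exists>i<p. i \<noteq> j \<and> u i \<noteq> 0")
    case True
    then obtain i where "i < p" "i \<noteq> j" "u i \<noteq> 0" by blast
    then have "0 < (\<Sum>i<p. (\<alpha> i - x) * (u i)\<^sup>2)"
      using assms(5) nonneg by (intro sum_pos2[of _ i]) auto
    moreover have "0 \<le> x * (\<Sum>i<p. u i)\<^sup>2" using assms(3) by simp
    ultimately show ?thesis unfolding phi_form_def by linarith
  next
    case False
    have single: "(\<Sum>i<p. g i) = g j" if "\<forall>i<p. i \<noteq> j \<longrightarrow> g i = 0" for g :: "nat \<Rightarrow> real"
      using sum.remove[of "{..<p}" j g] assms(1) that by (simp add: sum.neutral)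
    have "(\<Sum>i<p. (\<alpha> i - x) * (u i)\<^sup>2) = (\<alpha> j - x) * (u j)\<^sup>2" "(\<Sum>i<p. u i) = u j"
      by (rule single, use False in auto)+
    then have "phi_form p \<alpha> x u = \<alpha> j * (u j)\<^sup>2"
      unfolding phi_form_def by (simp add: algebra_simps)
    moreover have "u j \<noteq> 0" using u False by blast
    ultimately show ?thesis using assms(2) by simp
  qed
qed

text \<open>With \<open>W\<close>, \<open>\<tau>\<close>, \<open>S\<close> the sums over the other
  indices, the identity \<open>\<alpha>\<^sub>j \<tau>\<^sup>2 + S \<alpha>\<^sub>j Q' = S (\<alpha>\<^sub>j u\<^sub>j + x \<tau>)\<^sup>2 + (\<alpha>\<^sub>j - x) secular \<tau>\<^sup>2\<close>, where \<open>Q'\<close> is the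
  form without \<open>W\<close>, combines with Cauchy-Schwarz \<open>\<tau>\<^sup>2 \<le> W S\<close>.\<close>
lemma phi_pd_if_secular_neg:
  assumes "2 \<le> p" "j < p" "0 < \<alpha> j" "\<alpha> j < x" "\<forall>i<p. i \<noteq> j \<longrightarrow> x < \<alpha> i"
    and "secular p \<alpha> x < 0"
  shows "phi_pd p \<alpha> x"
  unfolding phi_pd_def
proof (intro allI impI)
  fix u :: "nat \<Rightarrow> real" assume u: "\<exists>i<p. u i \<noteq> 0"
  define I where "I = {..<p} - {j}"
  have "\<exists>i<p. i \<noteq> j" using assms(1) by (intro exI[of _ "if j = 0 then 1 else 0"]) auto
  then have "I \<noteq> {}" unfolding I_def by blast
  have I_pos: "\<forall>i\<in>I. 0 < \<alpha> i - x" using assms(5) unfolding I_def by auto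
  define W where "W = (\<Sum>i\<in>I. (\<alpha> i - x) * (u i)\<^sup>2)"
  define \<tau> where "\<tau> = (\<Sum>i\<in>I. u i)"
  define S where "S = (\<Sum>i\<in>I. 1 / (\<alpha> i - x))"
  define a where "a = \<alpha> j"
  have "0 < S"
    unfolding S_def using I_pos \<open>I \<noteq> {}\<close> by (intro sum_pos) (auto simp: I_def)
  have "\<tau>\<^sup>2 \<le> W * S"
    unfolding \<tau>_def W_def S_def using I_pos by (intro weighted_Cauchy_Schwarz) simp
  have split_j: "(\<Sum>i<p. g i) = g j + (\<Sum>i\<in>I. g i)" for g :: "nat \<Rightarrow> real"
    unfolding I_def using assms(2) by (intro sum.remove) auto
  have form: "phi_form p \<alpha> x u = W + (a - x) * (u j)\<^sup>2 + x * (u j + \<tau>)\<^sup>2"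
    unfolding phi_form_def W_def \<tau>_def a_def split_j by simp
  define g where "g = (a - x) * secular p \<alpha> x"
  have g_eq: "g = a + x * S * (a - x)"
    unfolding g_def secular_def S_def split_j a_def using assms(4)
    by (simp add: sum_distrib_left field_simps)
  have ident: "a * \<tau>\<^sup>2 + S * a * ((a - x) * (u j)\<^sup>2 + x * (u j + \<tau>)\<^sup>2)
      = S * (a * u j + x * \<tau>)\<^sup>2 + g * \<tau>\<^sup>2"
    unfolding g_eq by (simp add: power2_eq_square algebra_simps)
  have "0 < g" unfolding g_def a_def using assms(4,6) by (simp add: mult_neg_neg)
  have "0 < a" unfolding a_def using assms(3) .
  have "a * \<tau>\<^sup>2 \<le> a * (W * S)" using \<open>\<tau>\<^sup>2 \<le> W * S\<close> \<open>0 < a\<close> by simp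
  then have main: "S * (a * u j + x * \<tau>)\<^sup>2 + g * \<tau>\<^sup>2 \<le> (a * S) * phi_form p \<alpha> x u"
    unfolding form ident[symmetric] by (simp add: algebra_simps)
  have "0 < S * (a * u j + x * \<tau>)\<^sup>2 + g * \<tau>\<^sup>2 \<or> (\<tau> = 0 \<and> u j = 0)"
    using \<open>0 < S\<close> \<open>0 < g\<close> \<open>0 < a\<close> by (cases "\<tau> = 0") (auto intro: add_nonneg_pos)
  then show "0 < phi_form p \<alpha> x u"
  proof
    assume "0 < S * (a * u j + x * \<tau>)\<^sup>2 + g * \<tau>\<^sup>2"
    then have "0 < (a * S) * phi_form p \<alpha> x u" using main by linarith
    then show ?thesis using mult_pos_pos[OF \<open>0 < a\<close> \<open>0 < S\<close>] zero_less_mult_pos by blast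
  next
    assume zero: "\<tau> = 0 \<and> u j = 0"
    then obtain i where "i \<in> I" "u i \<noteq> 0" using u unfolding I_def by auto
    then have "0 < W"
      unfolding W_def using I_pos by (intro sum_pos2[of _ i]) (auto simp: I_def less_imp_le)
    then show ?thesis unfolding form using zero by simp
  qed
qed

lemma phi_neg_singular_point:
  assumes "2 \<le> p" "\<forall>i<p. 0 < \<alpha> i"
  shows "\<exists>a<0. phi_singular p \<alpha> a \<and> (\<forall>x<0. phi_singular p \<alpha> x \<longrightarrow> x = a)
           \<and> (\<forall>x. a < x \<and> x \<le> 0 \<longrightarrow> phi_pd p \<alpha> x)"
proof -
  obtain a where a: "a < 0" "secular p \<alpha> a = 0" using secular_neg_root[OF assms] by blast
  have below_poles: "x < \<alpha> i" if "x \<le> 0" "i < p" for x i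
    using assms(2) that by fastforce
  have mono: "secular p \<alpha> x < secular p \<alpha> y" if "x < y" "y \<le> 0" for x y
  proof (rule secular_strict_mono)
    show "\<forall>i<p. 0 < \<alpha> i \<and> 0 < (\<alpha> i - x) * (\<alpha> i - y)"
      using assms(2) below_poles[of x] below_poles[of y] that by simp
  qed (use assms(1) that in auto)
  have singular_iff: "phi_singular p \<alpha> x \<longleftrightarrow> secular p \<alpha> x = 0" if "x \<le> 0" for x
    using assms(1) below_poles[OF that] by (intro phi_singular_iff_secular_eq_0) auto
  have "x = a" if "x < 0" "phi_singular p \<alpha> x" for x
  proof (rule ccontr)
    have eq: "secular p \<alpha> x = secular p \<alpha> a" using that singular_iff[of x] a by simp
    assume "x \<noteq> a"
    then consider "x < a" | "a < x" by linarith
    then show False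
    proof cases
      case 1
      then show False using mono[of x a] a(1) eq by simp
    next
      case 2
      then show False using mono[of a x] that(1) eq by simp
    qed
  qed
  moreover have "phi_pd p \<alpha> x" if "a < x" "x \<le> 0" for x
    using assms(1) that below_poles[of x] mono[OF that] a(2) by (intro phi_pd_if_secular_pos) auto
  moreover have "phi_singular p \<alpha> a" using singular_iff[of a] a by simp
  ultimately show ?thesis using a(1) by blast
qed

lemma phi_singular_repeated_diag:
  assumes "j < p" "k < p" "j \<noteq> k" "\<alpha> j = \<alpha> k"
  shows "phi_singular p \<alpha> (\<alpha> j)"
proof -
  define u :: "nat \<Rightarrow> real" where "u i = (if i = j then 1 else if i = k then -1 else 0)" for i
  have "(\<Sum>l<p. u l) = 0"
    using sum.remove[of "{..<p}" j u] sum.remove[of "{..<p} - {j}" k u] assms(1-3)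
    by (simp add: u_def sum.neutral)
  then show ?thesis
    unfolding phi_singular_def using assms by (intro exI[of _ u]) (auto simp: u_def)
qed

lemma phi_pos_singular_point:
  assumes "2 \<le> p" "\<forall>i<p. 0 < \<alpha> i"
  shows "\<exists>b>0. phi_singular p \<alpha> b \<and> (\<forall>x. 0 \<le> x \<and> x < b \<longrightarrow> phi_pd p \<alpha> x)"
proof -
  have "\<alpha> ` {..<p} \<noteq> {}" using assms(1) by (auto simp: lessThan_empty_iff)
  then have "Min (\<alpha> ` {..<p}) \<in> \<alpha> ` {..<p}" by (intro Min_in) auto
  then obtain j where j: "j < p" "\<alpha> j = Min (\<alpha> ` {..<p})" by auto
  then have j_min: "\<alpha> j \<le> \<alpha> i" if "i < p" for i using that by simp
  have "0 < \<alpha> j" using assms(2) j(1) by blast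
  show ?thesis
  proof (cases "\<exists>k<p. k \<noteq> j \<and> \<alpha> k = \<alpha> j")
    case True
    then obtain k where k: "k < p" "k \<noteq> j" "\<alpha> k = \<alpha> j" by blast
    then have "phi_singular p \<alpha> (\<alpha> j)" using phi_singular_repeated_diag[of j p k \<alpha>] j(1) by simp
    moreover have "phi_pd p \<alpha> x" if "0 \<le> x" "x < \<alpha> j" for x
      using that j_min j(1) \<open>0 < \<alpha> j\<close> by (intro phi_pd_nonneg_below_diag) force+
    ultimately show ?thesis using \<open>0 < \<alpha> j\<close> by blast
  next
    case False
    then have j_less: "\<alpha> j < \<alpha> i" if "i < p" "i \<noteq> j" for i
      using j_min[OF that(1)] that by force
    define J where "J = {..<p} - {j}"
    have "\<exists>i<p. i \<noteq> j" using assms(1) by (intro exI[of _ "if j = 0 then 1 else 0"]) auto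
    then have "\<alpha> ` J \<noteq> {}" unfolding J_def by blast
    then have "Min (\<alpha> ` J) \<in> \<alpha> ` J" by (intro Min_in) (auto simp: J_def)
    then obtain k where k: "k \<in> J" "\<alpha> k = Min (\<alpha> ` J)" by auto
    then have k_min: "\<alpha> k \<le> \<alpha> i" if "i < p" "i \<noteq> j" for i
      using that unfolding J_def by simp
    have "k < p" "k \<noteq> j" using k(1) unfolding J_def by auto
    then obtain b where b: "\<alpha> j < b" "b < \<alpha> k" "secular p \<alpha> b = 0"
      using secular_root_between_min[of j p k \<alpha>] j(1) \<open>0 < \<alpha> j\<close> j_less k_min by blast
    have off_poles: "\<alpha> i - x \<noteq> 0 \<and> 0 < (\<alpha> i - x) * (\<alpha> i - b)"
      if "i < p" "\<alpha> j < x" "x \<le> b" for i x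
      using that b k_min[of i] by (cases "i = j") (auto intro: mult_pos_pos mult_neg_neg)
    have "phi_singular p \<alpha> b"
      using phi_singular_iff_secular_eq_0[of p \<alpha> b] off_poles[of _ b] b assms(1) by force
    moreover have "phi_pd p \<alpha> x" if x: "0 \<le> x" "x < b" for x
    proof (cases "x \<le> \<alpha> j")
      case True
      then show ?thesis
        using x j(1) \<open>0 < \<alpha> j\<close> j_less by (intro phi_pd_nonneg_below_diag) force+
    next
      case False
      then have "secular p \<alpha> x < secular p \<alpha> b"
        using x assms off_poles by (intro secular_strict_mono) auto
      moreover have "x < \<alpha> i" if "i < p" "i \<noteq> j" for i
        using that k_min x b by force
      ultimately show ?thesis
        using assms(1) j(1) \<open>0 < \<alpha> j\<close> False b by (intro phi_pd_if_secular_neg) auto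
    qed
    ultimately show ?thesis using b \<open>0 < \<alpha> j\<close> by (intro exI[of _ b]) auto
  qed
qed

subsection \<open>The roots of \<open>det \<phi>(A)\<close>\<close>

lemma vec_eq_zero_iff:
  "v \<in> carrier_vec N \<Longrightarrow> v = 0\<^sub>v N \<longleftrightarrow> (\<forall>i<N. v $ i = 0)"
  by (auto intro: eq_vecI)

lemma phiI_mult_vec:
  assumes "v \<in> carrier_vec p" "i < p"
  shows "(phiI p \<alpha> x *\<^sub>v v) $ i = (\<alpha> i - x) * v $ i + x * (\<Sum>l<p. v $ l)"
proof -
  have "(phiI p \<alpha> x *\<^sub>v v) $ i = (\<Sum>l<p. (if i = l then \<alpha> i else x) * v $ l)"
    using assms unfolding phiI_def by (simp add: scalar_prod_def atLeast0LessThan)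
  also have "\<dots> = (\<Sum>l<p. x * v $ l + (if i = l then (\<alpha> i - x) * v $ l else 0))"
    by (rule sum.cong) (auto simp: algebra_simps)
  also have "\<dots> = (\<alpha> i - x) * v $ i + x * (\<Sum>l<p. v $ l)"
    using assms(2) by (simp add: sum.distrib sum_distrib_left)
  finally show ?thesis .
qed

lemma dpoly_eq_0_iff_phi_singular: "dpoly p \<alpha> x = 0 \<longleftrightarrow> phi_singular p \<alpha> x"
proof -
  have carrier: "phiI p \<alpha> x \<in> carrier_mat p p" unfolding phiI_def by simp
  have kernel: "phiI p \<alpha> x *\<^sub>v v = 0\<^sub>v p \<longleftrightarrow> (\<forall>i<p. (\<alpha> i - x) * v $ i + x * (\<Sum>l<p. v $ l) = 0)"
    if "v \<in> carrier_vec p" for v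
    using that carrier
    by (subst vec_eq_zero_iff) (auto simp del: index_mult_mat_vec simp add: phiI_mult_vec)
  have "dpoly p \<alpha> x = 0 \<longleftrightarrow> (\<exists>v\<in>carrier_vec p. v \<noteq> 0\<^sub>v p \<and> phiI p \<alpha> x *\<^sub>v v = 0\<^sub>v p)"
    unfolding dpoly_def using det_0_iff_vec_prod_zero_field[OF carrier] by blast
  also have "\<dots> \<longleftrightarrow> phi_singular p \<alpha> x"
  proof
    assume "\<exists>v\<in>carrier_vec p. v \<noteq> 0\<^sub>v p \<and> phiI p \<alpha> x *\<^sub>v v = 0\<^sub>v p"
    then obtain v where "v \<in> carrier_vec p" "v \<noteq> 0\<^sub>v p" "phiI p \<alpha> x *\<^sub>v v = 0\<^sub>v p" by blast
    then show "phi_singular p \<alpha> x"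
      unfolding phi_singular_def using kernel vec_eq_zero_iff by (intro exI[of _ "\<lambda>i. v $ i"]) auto
  next
    assume "phi_singular p \<alpha> x"
    then obtain u where "\<exists>i<p. u i \<noteq> 0" "\<forall>i<p. (\<alpha> i - x) * u i + x * (\<Sum>l<p. u l) = 0"
      unfolding phi_singular_def by blast
    moreover have "(\<Sum>l<p. vec p u $ l) = (\<Sum>l<p. u l)" by simp
    ultimately show "\<exists>v\<in>carrier_vec p. v \<noteq> 0\<^sub>v p \<and> phiI p \<alpha> x *\<^sub>v v = 0\<^sub>v p"
      using kernel[of "vec p u"] vec_eq_zero_iff[of "vec p u"] by (intro bexI[of _ "vec p u"]) auto
  qed
  finally show ?thesis .
qed

lemma dpoly_eq_poly_det:
  "dpoly p \<alpha> x = poly (det (mat p p (\<lambda>(i, j). if i = j then [:\<alpha> i:] else [:0, 1:]))) x"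
proof -
  let ?M = "mat p p (\<lambda>(i, j). if i = j then [:\<alpha> i:] else [:0, 1:])"
  interpret eval: comm_ring_hom "\<lambda>q. poly q x" by unfold_locales auto
  have "map_mat (\<lambda>q. poly q x) ?M = phiI p \<alpha> x"
    unfolding phiI_def by (rule eq_matI) auto
  then show ?thesis unfolding dpoly_def using eval.hom_det[of ?M] by simp
qed

lemma finite_droots:
  assumes "\<not> phi_singular p \<alpha> 0"
  shows "finite (droots p \<alpha>)"
proof -
  let ?d = "det (mat p p (\<lambda>(i, j). if i = j then [:\<alpha> i:] else [:0, 1:]))"
  have "dpoly p \<alpha> 0 \<noteq> 0" using assms dpoly_eq_0_iff_phi_singular by simp
  then have "poly ?d 0 \<noteq> 0" unfolding dpoly_eq_poly_det .
  then have "?d \<noteq> 0" by auto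
  then show ?thesis unfolding droots_def dpoly_eq_poly_det by (rule poly_roots_finite)
qed

lemma phi_pd_iff_between_singular:
  assumes "phi_singular p \<alpha> a" "phi_singular p \<alpha> b" "a < 0" "0 < b"
    and "\<forall>x. a < x \<and> x < b \<longrightarrow> phi_pd p \<alpha> x"
  shows "phi_pd p \<alpha> x \<longleftrightarrow> a < x \<and> x < b"
proof
  assume pd: "phi_pd p \<alpha> x"
  have "phi_pd p \<alpha> 0" using assms(3-5) by simp
  have "a < x"
  proof (rule ccontr)
    assume "\<not> a < x"
    then have "phi_pd p \<alpha> a" using phi_pd_between[OF pd \<open>phi_pd p \<alpha> 0\<close>] assms(3) by simp
    then show False using phi_singular_not_pd[OF assms(1)] by simp
  qed
  moreover have "x < b"
  proof (rule ccontr)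
    assume "\<not> x < b"
    then have "phi_pd p \<alpha> b" using phi_pd_between[OF \<open>phi_pd p \<alpha> 0\<close> pd] assms(4) by simp
    then show False using phi_singular_not_pd[OF assms(2)] by simp
  qed
  ultimately show "a < x \<and> x < b" ..
qed (use assms(5) in blast)

lemma r1_r2_eqI:
  assumes "finite (droots p \<alpha>)" "a \<in> droots p \<alpha>" "b \<in> droots p \<alpha>" "a < b"
    and "\<forall>x\<in>droots p \<alpha>. x = a \<or> b \<le> x"
  shows "r1 p \<alpha> = a \<and> r2 p \<alpha> = b"
proof
  show "r1 p \<alpha> = a"
    unfolding r1_def
  proof (rule Min_eqI)
    fix y assume "y \<in> droots p \<alpha>"
    then show "a \<le> y" using assms(4,5) by force
  qed (use assms(1,2) in simp_all)
  show "r2 p \<alpha> = b"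
    unfolding r2_def
  proof (rule Min_eqI)
    fix y assume "y \<in> droots p \<alpha> - {r1 p \<alpha>}"
    then show "b \<le> y" using assms(5) \<open>r1 p \<alpha> = a\<close> by force
  qed (use assms(1,3,4) \<open>r1 p \<alpha> = a\<close> in simp_all)
qed

lemma phi_pd_iff_between_roots:
  assumes "2 \<le> p" "\<forall>i<p. 0 < \<alpha> i"
  shows "phi_pd p \<alpha> x \<longleftrightarrow> r1 p \<alpha> < x \<and> x < r2 p \<alpha>"
proof -
  obtain a where a: "a < 0" "phi_singular p \<alpha> a" "\<forall>x<0. phi_singular p \<alpha> x \<longrightarrow> x = a"
    "\<forall>x. a < x \<and> x \<le> 0 \<longrightarrow> phi_pd p \<alpha> x"
    using phi_neg_singular_point[OF assms] by blast
  obtain b where b: "b > 0" "phi_singular p \<alpha> b" "\<forall>x. 0 \<le> x \<and> x < b \<longrightarrow> phi_pd p \<alpha> x"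
    using phi_pos_singular_point[OF assms] by blast
  have "\<forall>x. a < x \<and> x < b \<longrightarrow> phi_pd p \<alpha> x"
  proof (intro allI impI)
    fix x assume "a < x \<and> x < b"
    then show "phi_pd p \<alpha> x" using a(4) b(3) by (cases "x \<le> 0") auto
  qed
  then have pd_iff: "phi_pd p \<alpha> x \<longleftrightarrow> a < x \<and> x < b" for x
    using a(1,2) b(1,2) by (intro phi_pd_iff_between_singular)
  have roots: "x \<in> droots p \<alpha> \<longleftrightarrow> phi_singular p \<alpha> x" for x
    unfolding droots_def using dpoly_eq_0_iff_phi_singular by simp
  have "phi_pd p \<alpha> 0" using pd_iff[of 0] a(1) b(1) by simp
  then have finite: "finite (droots p \<alpha>)"
    using phi_singular_not_pd by (intro finite_droots) blast
  have "\<forall>x\<in>droots p \<alpha>. x = a \<or> b \<le> x"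
  proof
    fix x assume "x \<in> droots p \<alpha>"
    then have "phi_singular p \<alpha> x" using roots by simp
    then have "\<not> (a < x \<and> x < b)" using pd_iff[of x] phi_singular_not_pd by blast
    show "x = a \<or> b \<le> x"
    proof (cases "x < 0")
      case True
      then show ?thesis using a(3) \<open>phi_singular p \<alpha> x\<close> by blast
    next
      case False
      then show ?thesis using \<open>\<not> (a < x \<and> x < b)\<close> a(1) by linarith
    qed
  qed
  then have "r1 p \<alpha> = a \<and> r2 p \<alpha> = b"
    using finite roots a(1,2) b(1,2) by (intro r1_r2_eqI) auto
  then show ?thesis using pd_iff by simp
qed

lemma root_interval_mono:
  assumes "2 \<le> p" "\<forall>j<p. 0 < \<alpha> j" "\<forall>j<p. \<alpha> j \<le> \<alpha>' j"
  shows "{r1 p \<alpha> <..< r2 p \<alpha>} \<subseteq> {r1 p \<alpha>' <..< r2 p \<alpha>'}"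
proof
  fix x assume "x \<in> {r1 p \<alpha> <..< r2 p \<alpha>}"
  then have "phi_pd p \<alpha> x" using phi_pd_iff_between_roots[OF assms(1,2)] by simp
  then have "phi_pd p \<alpha>' x" using phi_pd_mono assms(3) by blast
  moreover have "\<forall>j<p. 0 < \<alpha>' j" using assms(2,3) by (meson less_le_trans)
  ultimately show "x \<in> {r1 p \<alpha>' <..< r2 p \<alpha>'}"
    using phi_pd_iff_between_roots[OF assms(1)] by simp
qed

subsection \<open>Reduction from \<open>A\<close> to \<open>\<phi>(A)\<close>\<close>

definition quad_form :: "nat \<Rightarrow> (nat \<times> nat \<Rightarrow> real) \<Rightarrow> (nat \<Rightarrow> real) \<Rightarrow> real" where
  "quad_form N f v = (\<Sum>i<N. \<Sum>j<N. v i * f (i, j) * v j)"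

lemma pos_def_mat_iff:
  assumes "\<forall>i<N. \<forall>j<N. f (i, j) = f (j, i)"
  shows "pos_def (mat N N f) \<longleftrightarrow> (\<forall>v. (\<exists>i<N. v i \<noteq> 0) \<longrightarrow> 0 < quad_form N f v)"
proof -
  have form: "w \<bullet> (mat N N f *\<^sub>v w) = quad_form N f (\<lambda>i. w $ i)" if "w \<in> carrier_vec N" for w
  proof -
    have "w \<bullet> (mat N N f *\<^sub>v w) = (\<Sum>i<N. w $ i * (\<Sum>j<N. f (i, j) * w $ j))"
      using that by (auto simp: scalar_prod_def atLeast0LessThan intro: sum.cong)
    then show ?thesis unfolding quad_form_def by (simp add: sum_distrib_left mult.assoc)
  qed
  have "(mat N N f)\<^sup>T = mat N N f" using assms by (intro eq_matI) auto
  then have "pos_def (mat N N f) \<longleftrightarrow>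
      (\<forall>w\<in>carrier_vec N. w \<noteq> 0\<^sub>v N \<longrightarrow> 0 < quad_form N f (\<lambda>i. w $ i))"
    unfolding pos_def_def using form by simp
  also have "\<dots> \<longleftrightarrow> (\<forall>v. (\<exists>i<N. v i \<noteq> 0) \<longrightarrow> 0 < quad_form N f v)"
  proof
    assume pd: "\<forall>w\<in>carrier_vec N. w \<noteq> 0\<^sub>v N \<longrightarrow> 0 < quad_form N f (\<lambda>i. w $ i)"
    show "\<forall>v. (\<exists>i<N. v i \<noteq> 0) \<longrightarrow> 0 < quad_form N f v"
    proof (intro allI impI)
      fix v :: "nat \<Rightarrow> real" assume "\<exists>i<N. v i \<noteq> 0"
      then have "vec N v \<noteq> 0\<^sub>v N" using vec_eq_zero_iff[of "vec N v" N] by auto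
      then have "0 < quad_form N f (\<lambda>i. vec N v $ i)" using pd by simp
      moreover have "quad_form N f (\<lambda>i. vec N v $ i) = quad_form N f v"
        unfolding quad_form_def by (auto intro!: sum.cong)
      ultimately show "0 < quad_form N f v" by simp
    qed
  qed (use vec_eq_zero_iff in blast)
  finally show ?thesis .
qed

definition grp_start :: "(nat \<Rightarrow> nat) \<Rightarrow> nat \<Rightarrow> nat" where
  "grp_start n k = (\<Sum>j<k. n j)"

definition grp_set :: "(nat \<Rightarrow> nat) \<Rightarrow> nat \<Rightarrow> nat set" where
  "grp_set n k = {grp_start n k..<grp_start n (Suc k)}"

definition grp_sum :: "(nat \<Rightarrow> nat) \<Rightarrow> (nat \<Rightarrow> real) \<Rightarrow> nat \<Rightarrow> real" where
  "grp_sum n v k = (\<Sum>i\<in>grp_set n k. v i)"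

definition block_entry :: "(nat \<Rightarrow> nat) \<Rightarrow> (nat \<Rightarrow> real) \<Rightarrow> real \<Rightarrow> nat \<times> nat \<Rightarrow> real" where
  "block_entry n b c = (\<lambda>(i, j). if grp n i = grp n j then (if i = j then 1 else b (grp n i)) else c)"

lemma block_mat_eq: "block_mat p n b (\<lambda>k l. c) = mat (grp_start n p) (grp_start n p) (block_entry n b c)"
  unfolding block_mat_def block_entry_def grp_start_def ..

lemma grp_start_mono: "k \<le> l \<Longrightarrow> grp_start n k \<le> grp_start n l"
  unfolding grp_start_def by (rule sum_mono2) auto

lemma card_grp_set: "card (grp_set n k) = n k"
  unfolding grp_set_def grp_start_def by simp

lemma grp_eq:
  assumes "i \<in> grp_set n k"
  shows "grp n i = k"
proof -
  have "grp n i = (LEAST l. i < grp_start n (Suc l))" unfolding grp_def grp_start_def ..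
  also have "\<dots> = k"
  proof (rule Least_equality)
    show "i < grp_start n (Suc k)" using assms unfolding grp_set_def by simp
    fix l assume l: "i < grp_start n (Suc l)"
    show "k \<le> l"
    proof (rule ccontr)
      assume "\<not> k \<le> l"
      then have "grp_start n (Suc l) \<le> grp_start n k" by (intro grp_start_mono) simp
      then show False using l assms unfolding grp_set_def by simp
    qed
  qed
  finally show ?thesis .
qed

lemma grp_set_cover: "i < grp_start n p \<Longrightarrow> \<exists>k<p. i \<in> grp_set n k"
proof (induction p)
  case (Suc p)
  show ?case
  proof (cases "i < grp_start n p")
    case True
    then show ?thesis using Suc.IH less_SucI by blast
  next
    case False
    then have "i \<in> grp_set n p" using Suc.prems unfolding grp_set_def by simp
    then show ?thesis by blast
  qed
qed (simp add: grp_start_def)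

lemma grp_less: "i < grp_start n p \<Longrightarrow> grp n i < p"
  using grp_set_cover grp_eq by blast

lemma grp_set_eq_filter:
  assumes "k < p"
  shows "grp_set n k = {i \<in> {..<grp_start n p}. grp n i = k}"
proof (intro equalityI subsetI)
  fix i assume i: "i \<in> grp_set n k"
  have "grp_start n (Suc k) \<le> grp_start n p" using assms by (intro grp_start_mono) simp
  then show "i \<in> {i \<in> {..<grp_start n p}. grp n i = k}"
    using i grp_eq[OF i] unfolding grp_set_def by simp
next
  fix i assume "i \<in> {i \<in> {..<grp_start n p}. grp n i = k}"
  then show "i \<in> grp_set n k" using grp_set_cover[of i n p] grp_eq by force
qed

lemma sum_lessThan_grp_start: "(\<Sum>i<grp_start n p. f i) = (\<Sum>k<p. \<Sum>i\<in>grp_set n k. f i)"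
proof (induction p)
  case (Suc p)
  have "(\<Sum>i<grp_start n (Suc p). f i) = (\<Sum>i<grp_start n p. f i) + (\<Sum>i\<in>grp_set n p. f i)"
    unfolding grp_set_def lessThan_atLeast0
    by (rule sum.atLeastLessThan_concat[symmetric]) (auto intro: grp_start_mono)
  then show ?case using Suc.IH by simp
qed (simp add: grp_start_def)

lemma sum_grp_weighted:
  "(\<Sum>i<grp_start n p. h (grp n i) * f i) = (\<Sum>k<p. h k * grp_sum n f k)"
  unfolding sum_lessThan_grp_start grp_sum_def sum_distrib_left
  by (intro sum.cong refl) (simp add: grp_eq)

lemma quad_form_block_entry:
  "quad_form (grp_start n p) (block_entry n b c) v
     = (\<Sum>i<grp_start n p. (1 - b (grp n i)) * (v i)\<^sup>2)
       + (\<Sum>k<p. (b k - c) * (grp_sum n v k)\<^sup>2) + c * (\<Sum>i<grp_start n p. v i)\<^sup>2"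
proof -
  let ?N = "grp_start n p" and ?g = "grp n"
  have split: "v i * block_entry n b c (i, j) * v j
      = (if i = j then (1 - b (?g i)) * (v i)\<^sup>2 else 0)
        + (if ?g j = ?g i then (b (?g i) - c) * v i * v j else 0) + c * (v i * v j)" for i j
    unfolding block_entry_def by (auto simp: algebra_simps power2_eq_square)
  have diag: "(\<Sum>i<?N. \<Sum>j<?N. if i = j then (1 - b (?g i)) * (v i)\<^sup>2 else 0)
      = (\<Sum>i<?N. (1 - b (?g i)) * (v i)\<^sup>2)"
    by (intro sum.cong refl) (simp add: sum.delta)
  have "(\<Sum>j<?N. if ?g j = ?g i then (b (?g i) - c) * v i * v j else 0)
      = (b (?g i) - c) * (v i * grp_sum n v (?g i))" if "i < ?N" for i
    unfolding grp_sum_def grp_set_eq_filter[OF grp_less[OF that]]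
    by (simp add: sum.inter_filter[symmetric] sum_distrib_left algebra_simps)
  then have "(\<Sum>i<?N. \<Sum>j<?N. if ?g j = ?g i then (b (?g i) - c) * v i * v j else 0)
      = (\<Sum>i<?N. (b (?g i) - c) * (v i * grp_sum n v (?g i)))"
    by simp
  also have "\<dots> = (\<Sum>k<p. (b k - c) * grp_sum n (\<lambda>i. v i * grp_sum n v (?g i)) k)"
    by (rule sum_grp_weighted)
  also have "\<dots> = (\<Sum>k<p. (b k - c) * (grp_sum n v k)\<^sup>2)"
    unfolding grp_sum_def
    by (intro sum.cong refl) (simp add: grp_eq power2_eq_square sum_distrib_right cong: sum.cong)
  finally have within: "(\<Sum>i<?N. \<Sum>j<?N. if ?g j = ?g i then (b (?g i) - c) * v i * v j else 0)
      = (\<Sum>k<p. (b k - c) * (grp_sum n v k)\<^sup>2)" .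
  have "(\<Sum>i<?N. \<Sum>j<?N. c * (v i * v j)) = (\<Sum>i<?N. c * (v i * (\<Sum>j<?N. v j)))"
    by (simp add: sum_distrib_left)
  also have "\<dots> = c * (\<Sum>i<?N. v i)\<^sup>2"
    by (simp only: power2_eq_square sum_distrib_left[symmetric] sum_distrib_right[symmetric])
  finally show ?thesis unfolding quad_form_def split sum.distrib diag within by simp
qed

lemma quad_form_block_entry_decomp:
  "quad_form (grp_start n p) (block_entry n b c) v
     = phi_form p (alpha n b) c (grp_sum n v)
       + (\<Sum>k<p. (1 - b k) * ((\<Sum>i\<in>grp_set n k. (v i)\<^sup>2) - (grp_sum n v k)\<^sup>2 / n k))"
proof -
  let ?W = "\<lambda>k. \<Sum>i\<in>grp_set n k. (v i)\<^sup>2" and ?s = "grp_sum n v"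
  have per_group: "(1 - b k) * ?W k + (b k - c) * (?s k)\<^sup>2
      = (alpha n b k - c) * (?s k)\<^sup>2 + (1 - b k) * (?W k - (?s k)\<^sup>2 / n k)" for k
  proof (cases "n k = 0")
    case True
    then have "?s k = 0" unfolding grp_sum_def grp_set_def grp_start_def by simp
    then show ?thesis by simp
  next
    case False
    then show ?thesis unfolding alpha_def by (simp add: field_simps)
  qed
  have "(\<Sum>i<grp_start n p. v i) = (\<Sum>k<p. ?s k)"
    unfolding grp_sum_def by (rule sum_lessThan_grp_start)
  then have "quad_form (grp_start n p) (block_entry n b c) v
      = (\<Sum>k<p. (1 - b k) * ?W k + (b k - c) * (?s k)\<^sup>2) + c * (\<Sum>k<p. ?s k)\<^sup>2"
    unfolding quad_form_block_entry sum_grp_weighted[where h = "\<lambda>k. 1 - b k" and f = "\<lambda>i. (v i)\<^sup>2"]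
    by (simp add: grp_sum_def sum.distrib)
  also have "\<dots> = (\<Sum>k<p. (alpha n b k - c) * (?s k)\<^sup>2 + (1 - b k) * (?W k - (?s k)\<^sup>2 / n k))
      + c * (\<Sum>k<p. ?s k)\<^sup>2"
    by (simp only: per_group)
  finally show ?thesis unfolding phi_form_def sum.distrib by simp
qed

lemma grp_sum_square_le: "(grp_sum n v k)\<^sup>2 / n k \<le> (\<Sum>i\<in>grp_set n k. (v i)\<^sup>2)"
proof (cases "n k = 0")
  case False
  have "(grp_sum n v k)\<^sup>2 \<le> (\<Sum>i\<in>grp_set n k. (v i)\<^sup>2) * n k"
    using sum_squared_le_sum_of_squares[of v "grp_set n k"] card_grp_set[of n k]
    unfolding grp_sum_def by simp
  then show ?thesis using False by (simp add: divide_le_eq)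
qed (simp add: sum_nonneg)

lemma quad_form_block_entry_spread:
  assumes "\<forall>k<p. 1 \<le> n k"
  shows "quad_form (grp_start n p) (block_entry n b c) (\<lambda>i. u (grp n i) / n (grp n i))
       = phi_form p (alpha n b) c u"
proof -
  let ?v = "\<lambda>i. u (grp n i) / n (grp n i)"
  have sum_spread: "(\<Sum>i\<in>grp_set n k. f (?v i)) = n k * f (u k / n k)"
    for k and f :: "real \<Rightarrow> real"
    using card_grp_set[of n k] by (simp add: grp_eq cong: sum.cong)
  have "grp_sum n ?v k = u k" if "k < p" for k
    using sum_spread[where k = k and f = "\<lambda>t. t"] assms that unfolding grp_sum_def by force
  moreover have "(\<Sum>i\<in>grp_set n k. (?v i)\<^sup>2) = (u k)\<^sup>2 / n k" if "k < p" for k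
    using sum_spread[where k = k and f = "\<lambda>t. t\<^sup>2"] assms that by (force simp: power2_eq_square)
  ultimately show ?thesis
    unfolding quad_form_block_entry_decomp phi_form_def by simp
qed

lemma block_pd_iff_phi_pd:
  assumes "\<forall>k<p. 1 \<le> n k" "\<forall>k<p. b k < 1"
  shows "pos_def (block_mat p n b (\<lambda>k l. c)) \<longleftrightarrow> phi_pd p (alpha n b) c"
proof -
  let ?N = "grp_start n p"
  have "pos_def (block_mat p n b (\<lambda>k l. c))
      \<longleftrightarrow> (\<forall>v. (\<exists>i<?N. v i \<noteq> 0) \<longrightarrow> 0 < quad_form ?N (block_entry n b c) v)"
    unfolding block_mat_eq by (rule pos_def_mat_iff) (auto simp: block_entry_def)
  also have "\<dots> \<longleftrightarrow> phi_pd p (alpha n b) c"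
  proof
    assume pd: "\<forall>v. (\<exists>i<?N. v i \<noteq> 0) \<longrightarrow> 0 < quad_form ?N (block_entry n b c) v"
    show "phi_pd p (alpha n b) c"
      unfolding phi_pd_def
    proof (intro allI impI)
      fix u :: "nat \<Rightarrow> real" assume "\<exists>k<p. u k \<noteq> 0"
      then obtain k where k: "k < p" "u k \<noteq> 0" by blast
      have "grp_start n k \<in> grp_set n k"
        using assms(1) k(1) unfolding grp_set_def grp_start_def by (simp add: Suc_le_eq)
      moreover have "grp_set n k \<subseteq> {..<?N}" using grp_set_eq_filter[OF k(1)] by blast
      ultimately have "\<exists>i<?N. u (grp n i) / n (grp n i) \<noteq> 0"
        using k assms(1) grp_eq by (intro exI[of _ "grp_start n k"]) force
      then show "0 < phi_form p (alpha n b) c u"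
        using pd quad_form_block_entry_spread[OF assms(1)] by metis
    qed
  next
    assume pd: "phi_pd p (alpha n b) c"
    show "\<forall>v. (\<exists>i<?N. v i \<noteq> 0) \<longrightarrow> 0 < quad_form ?N (block_entry n b c) v"
    proof (intro allI impI)
      fix v :: "nat \<Rightarrow> real" assume "\<exists>i<?N. v i \<noteq> 0"
      then obtain i where i: "i < ?N" "v i \<noteq> 0" by blast
      show "0 < quad_form ?N (block_entry n b c) v"
      proof (cases "\<exists>k<p. grp_sum n v k \<noteq> 0")
        case True
        then have "0 < phi_form p (alpha n b) c (grp_sum n v)" using pd unfolding phi_pd_def by blast
        moreover have "0 \<le> (\<Sum>k<p. (1 - b k) * ((\<Sum>i\<in>grp_set n k. (v i)\<^sup>2) - (grp_sum n v k)\<^sup>2 / n k))"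
          using assms(2) grp_sum_square_le by (intro sum_nonneg mult_nonneg_nonneg) force+
        ultimately show ?thesis unfolding quad_form_block_entry_decomp by linarith
      next
        case False
        have "0 < (\<Sum>i<?N. (1 - b (grp n i)) * (v i)\<^sup>2)"
          using assms(2) grp_less i by (intro sum_pos2[of _ i]) (auto simp: less_imp_le)
        moreover have "(\<Sum>i<?N. v i) = 0"
          using False sum_lessThan_grp_start[of v n p] unfolding grp_sum_def by simp
        ultimately show ?thesis unfolding quad_form_block_entry using False by simp
      qed
    qed
  qed
  finally show ?thesis .
qed

lemma alpha_less_one:
  assumes "2 \<le> n k" "b k < 1"
  shows "alpha n b k < 1"
proof -
  have "(real (n k) - 1) * b k < real (n k) - 1" using assms by simp
  then show ?thesis using assms(1) unfolding alpha_def by (simp add: field_simps)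
qed

theorem theorem3:
  fixes p :: nat and n :: "nat \<Rightarrow> nat" and b :: "nat \<Rightarrow> real" and c :: real
  assumes "p \<ge> 2"
    and "\<forall>k<p. n k \<ge> 1"
    and "\<forall>k<p. -1 < b k \<and> b k < 1"
    and "\<forall>k<p. n k = 1 \<longrightarrow> b k = 0"
    and "-1 < c" and "c < 1"
  shows "(pos_def (block_mat p n b (\<lambda>k l. c)) \<longleftrightarrow>
            (\<forall>k<p. 0 < alpha n b k \<and> (n k \<ge> 2 \<longrightarrow> alpha n b k < 1)) \<and>
            r1 p (alpha n b) < c \<and> c < r2 p (alpha n b))
       \<and> (\<forall>k<p. \<forall>\<alpha> \<alpha>'. (\<forall>j<p. 0 < \<alpha> j) \<longrightarrow> (\<forall>j<p. j \<noteq> k \<longrightarrow> \<alpha>' j = \<alpha> j) \<longrightarrow>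
              \<alpha> k \<le> \<alpha>' k \<longrightarrow>
              {r1 p \<alpha> <..< r2 p \<alpha>} \<subseteq> {r1 p \<alpha>' <..< r2 p \<alpha>'})"
proof (intro conjI allI impI)
  have "\<forall>k<p. b k < 1" using assms(3) by blast
  then have pd_iff: "pos_def (block_mat p n b (\<lambda>k l. c)) \<longleftrightarrow> phi_pd p (alpha n b) c"
    using block_pd_iff_phi_pd assms(2) by blast
  have "\<forall>k<p. n k \<ge> 2 \<longrightarrow> alpha n b k < 1" using alpha_less_one \<open>\<forall>k<p. b k < 1\<close> by blast
  then show "pos_def (block_mat p n b (\<lambda>k l. c)) \<longleftrightarrow>
      (\<forall>k<p. 0 < alpha n b k \<and> (n k \<ge> 2 \<longrightarrow> alpha n b k < 1)) \<and>
      r1 p (alpha n b) < c \<and> c < r2 p (alpha n b)"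
    unfolding pd_iff using phi_pd_diag_pos phi_pd_iff_between_roots[OF assms(1)] by blast
next
  fix k \<alpha> \<alpha>'
  assume pos: "\<forall>j<p. 0 < (\<alpha> :: nat \<Rightarrow> real) j"
    and others: "\<forall>j<p. j \<noteq> k \<longrightarrow> \<alpha>' j = \<alpha> j" and "\<alpha> k \<le> \<alpha>' k"
  then have "\<forall>j<p. \<alpha> j \<le> \<alpha>' j" by (metis order_refl)
  then show "{r1 p \<alpha> <..< r2 p \<alpha>} \<subseteq> {r1 p \<alpha>' <..< r2 p \<alpha>'}"
    using root_interval_mono assms(1) pos by blast
qed

end
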